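(* Let $\mathbf{a}=\langle a_1,\dots,a_s\rangle$ and $\mathbf{b}=\langle b_1,\dots,b_t\rangle$ be integer vectors with $a_1+\cdots+a_s=b_1+\cdots+b_t$, and let $n,m$ be positive integers. Let $r+1=\max(s,n+t)$ and \[\delta=a_1\varepsilon_1+\cdots+a_s\varepsilon_s-(b_1\varepsilon_{n+1}+\cdots+b_t\varepsilon_{n+t})\in\mathbb{Z}^{r+1}.\] Let $\Lambda=\{\varepsilon_i-\varepsilon_j:1\le i<j\le r+1,\ i\le n\}\subseteq\Phi^+_{A_r}$ and \[Q_\Lambda(\delta)=\Big\{p\in P_\Lambda(\delta):\ a_j+\#\{\text{elements of }p\text{ of the form }\varepsilon_i-\varepsilon_j\}\le m\ \text{for all } j\ge1\Big\},\] where $a_j=0$ for $j>s$ and elements of $p$ are counted with multiplicity. Then the map sending a juggling sequence to the multiset of roots $\varepsilon_i-\varepsilon_{i+j}$ (one per throw at time $i$ to height $j$) is a bijection from $\mathrm{JS}(\mathbf{a},\mathbf{b},n,m)$ onto $Q_\Lambda(\delta)$; hence $\mathsf{js}(\mathbf{a},\mathbf{b},n,m)=|Q_\Lambda(\delta)|$. Moreover, without hand capacity constraint, $\mathsf{js}(\mathbf{a},\mathbf{b},n)=K_\Lambda(\delta)$.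
   Context: A juggling state is a finitely supported integer vector $\mathbf{s}=\langle s_1,s_2,\dots\rangle$ indexed by heights (trailing zeros omitted; negative entries are magic balls). A juggling sequence of length $n$ from $\mathbf{a}$ to $\mathbf{b}$ is a sequence $(\mathbf{s}_0,\dots,\mathbf{s}_n)$ with $\mathbf{s}_0=\mathbf{a}$, $\mathbf{s}_n=\mathbf{b}$, such that for each $1\le i\le n$ there are nonnegative integers $c^{(i)}_k$ (finitely many nonzero) with $\sum_k c^{(i)}_k=(\mathbf{s}_{i-1})_1$ and $(\mathbf{s}_i)_k=(\mathbf{s}_{i-1})_{k+1}+c^{(i)}_k$ for all $k\ge1$; $c^{(i)}_j$ is the number of throws at time $i$ to height $j$. It has hand capacity $m$ if all entries of all $\mathbf{s}_i$ are $\le m$. $\mathrm{JS}(\mathbf{a},\mathbf{b},n,m)$ is the set of such sequences with hand capacity $m$, $\mathsf{js}(\mathbf{a},\mathbf{b},n,m)$ its cardinality; $\mathrm{JS}(\mathbf{a},\mathbf{b},n)$, $\mathsf{js}(\mathbf{a},\mathbf{b},n)$ are the same without hand capacity constraint. $\Phi^+_{A_r}=\{\varepsilon_i-\varepsilon_j:1\le i<j\le r+1\}\subset\mathbb{R}^{r+1}$; for $\Lambda\subseteq\Phi^+_{A_r}$, $P_\Lambda(\mu)$ is the set of finite multisets of elements of $\Lambda$ summing to $\mu$, and $K_\Lambda(\mu)=|P_\Lambda(\mu)|$. *)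

theory Defs
  imports Main "HOL-Library.Multiset"
begin

text \<open>Juggling states are functions nat => int indexed by heights 1,2,...;
  the value at index 0 is required to be 0, and the support must be finite.\<close>

definition juggling_state :: "(nat \<Rightarrow> int) \<Rightarrow> bool" where
  "juggling_state s \<longleftrightarrow> s 0 = 0 \<and> finite {k. s k \<noteq> 0}"

definition vec_state :: "int list \<Rightarrow> nat \<Rightarrow> int" where
  "vec_state v k = (if 1 \<le> k \<and> k \<le> length v then v ! (k - 1) else 0)"

text \<open>One step s -> s': throws c_k (c_k = number of throws to height k).\<close>
definition js_step :: "(nat \<Rightarrow> int) \<Rightarrow> (nat \<Rightarrow> int) \<Rightarrow> bool" where
  "js_step s s' \<longleftrightarrow> (\<exists>c :: nat \<Rightarrow> nat. c 0 = 0 \<and> finite {k. c k \<noteq> 0} \<and>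
      int (\<Sum>k\<in>{k. c k \<noteq> 0}. c k) = s 1 \<and>
      (\<forall>k\<ge>1. s' k = s (k + 1) + int (c k)))"

definition JS_nocap :: "int list \<Rightarrow> int list \<Rightarrow> nat \<Rightarrow> (nat \<Rightarrow> int) list set" where
  "JS_nocap a b n = {ss. length ss = n + 1 \<and> (\<forall>i\<le>n. juggling_state (ss ! i)) \<and>
      ss ! 0 = vec_state a \<and> ss ! n = vec_state b \<and>
      (\<forall>i<n. js_step (ss ! i) (ss ! Suc i))}"

definition JS :: "int list \<Rightarrow> int list \<Rightarrow> nat \<Rightarrow> nat \<Rightarrow> (nat \<Rightarrow> int) list set" where
  "JS a b n m = {ss \<in> JS_nocap a b n. \<forall>i\<le>n. \<forall>k. (ss ! i) k \<le> int m}"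

definition js :: "int list \<Rightarrow> int list \<Rightarrow> nat \<Rightarrow> nat \<Rightarrow> nat" where
  "js a b n m = card (JS a b n m)"

definition js_nocap :: "int list \<Rightarrow> int list \<Rightarrow> nat \<Rightarrow> nat" where
  "js_nocap a b n = card (JS_nocap a b n)"

definition throws :: "(nat \<Rightarrow> int) list \<Rightarrow> nat \<Rightarrow> nat \<Rightarrow> nat" where
  "throws ss i j = nat ((ss ! i) j - (ss ! (i - 1)) (j + 1))"

text \<open>Positive roots eps_i - eps_j (i < j) are represented by pairs (i, j).
  The map sending a juggling sequence to its multiset of roots
  eps_i - eps_(i+j), one per throw at time i to height j.\<close>
definition root_map :: "nat \<Rightarrow> (nat \<Rightarrow> int) list \<Rightarrow> (nat \<times> nat) multiset" where
  "root_map n ss = (\<Sum>i\<in>{1..n}. \<Sum>j\<in>{j. 1 \<le> j \<and> throws ss i j \<noteq> 0}.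
                       (replicate_mset (throws ss i j) (i, i + j) :: (nat \<times> nat) multiset))"

definition root_sum :: "(nat \<times> nat) multiset \<Rightarrow> nat \<Rightarrow> int" where
  "root_sum p k = int (size (filter_mset (\<lambda>x. fst x = k) p))
                - int (size (filter_mset (\<lambda>x. snd x = k) p))"

definition P_set :: "(nat \<times> nat) set \<Rightarrow> (nat \<Rightarrow> int) \<Rightarrow> (nat \<times> nat) multiset set" where
  "P_set L mu = {p. set_mset p \<subseteq> L \<and> root_sum p = mu}"

definition K_part :: "(nat \<times> nat) set \<Rightarrow> (nat \<Rightarrow> int) \<Rightarrow> nat" where
  "K_part L mu = card (P_set L mu)"

definition rp1 :: "int list \<Rightarrow> int list \<Rightarrow> nat \<Rightarrow> nat" where
  "rp1 a b n = max (length a) (n + length b)"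

definition Lambda :: "int list \<Rightarrow> int list \<Rightarrow> nat \<Rightarrow> (nat \<times> nat) set" where
  "Lambda a b n = {(i, j). 1 \<le> i \<and> i < j \<and> j \<le> rp1 a b n \<and> i \<le> n}"

definition delta :: "int list \<Rightarrow> int list \<Rightarrow> nat \<Rightarrow> nat \<Rightarrow> int" where
  "delta a b n k = vec_state a k - (if n < k then vec_state b (k - n) else 0)"

definition Q_set :: "int list \<Rightarrow> int list \<Rightarrow> nat \<Rightarrow> nat \<Rightarrow> (nat \<times> nat) multiset set" where
  "Q_set a b n m = {p \<in> P_set (Lambda a b n) (delta a b n).
      \<forall>j\<ge>1. vec_state a j + int (size (filter_mset (\<lambda>x. snd x = j) p)) \<le> int m}"

end

theory Submission
  imports Defs
begin

text \<open>A throw at time i to height j is recorded as the root (i, i + j), i.e. by its launch and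
  landing times. The state at time i is then determined by the multiset p of roots alone:
  the balls at height k are the balls of the initial state at height i + k plus the balls
  thrown at times \<le> i that land at time i + k, which inverts the root map.
  The throw condition at time i \<le> n (balls thrown = balls present at height 1) is the
  coordinate i of the root-sum equation, and the end state being b is its coordinates beyond n;
  the hand capacity is attained at the moment a ball is about to land, so it only constrains
  the landing counts.\<close>

definition throw_roots :: "nat \<Rightarrow> (nat \<times> nat) multiset \<Rightarrow> bool" where
  "throw_roots n p \<longleftrightarrow> (\<forall>x\<in>#p. 1 \<le> fst x \<and> fst x \<le> n \<and> fst x < snd x)"

lemma size_filter_launched_le_Suc:
  "size {#x\<in>#p. fst x \<le> Suc i \<and> snd x = j#}
     = size {#x\<in>#p. fst x \<le> i \<and> snd x = j#} + count p (Suc i, j)"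
proof -
  have "{#x\<in>#p. fst x \<le> Suc i \<and> snd x = j#}
      = {#x\<in>#p. fst x \<le> i \<and> snd x = j#} + {#x\<in>#p. x = (Suc i, j)#}"
    by (rule multiset_eqI) (auto simp: le_Suc_eq)
  then show ?thesis by (simp add: filter_eq_replicate_mset)
qed

lemma size_filter_launched_eq_sum_count:
  fixes p :: "(nat \<times> nat) multiset"
  assumes "\<forall>x\<in>#p. fst x < snd x"
  shows "size {#x\<in>#p. fst x = i#} = (\<Sum>j\<in>{j. count p (i, i + j) \<noteq> 0}. count p (i, i + j))"
proof -
  have "size {#x\<in>#p. fst x = i#} = (\<Sum>x\<in>{x\<in>set_mset p. fst x = i}. count p x)"
    by (simp add: size_multiset_overloaded_eq)
  also have "\<dots> = (\<Sum>j\<in>{j. count p (i, i + j) \<noteq> 0}. count p (i, i + j))"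
    by (rule sum.reindex_bij_witness[where j="\<lambda>x. snd x - i" and i="\<lambda>j. (i, i + j)"])
       (use assms in auto)
  finally show ?thesis .
qed

lemma finite_count_nonzero_launched:
  fixes p :: "(nat \<times> nat) multiset"
  shows "finite {j. count p (i, i + j) \<noteq> 0}"
proof (rule finite_subset)
  show "{j. count p (i, i + j) \<noteq> 0} \<subseteq> (\<lambda>x. snd x - i) ` set_mset p"
    by (force simp: count_eq_zero_iff)
qed simp

lemma count_root_map:
  assumes "\<forall>i\<in>{1..n}. finite {j. 1 \<le> j \<and> throws ss i j \<noteq> 0}"
  shows "count (root_map n ss) (i, k)
           = (if 1 \<le> i \<and> i \<le> n \<and> i < k then throws ss i (k - i) else 0)"
proof -
  have inner: "(\<Sum>j\<in>{j. 1 \<le> j \<and> throws ss i' j \<noteq> 0}.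
                  count (replicate_mset (throws ss i' j) (i', i' + j)) (i, k))
             = (if i' = i \<and> i < k then throws ss i (k - i) else 0)" if "i' \<in> {1..n}" for i'
  proof -
    let ?S = "{j. 1 \<le> j \<and> throws ss i' j \<noteq> 0}"
    have "(\<Sum>j\<in>?S. count (replicate_mset (throws ss i' j) (i', i' + j)) (i, k))
        = (\<Sum>j\<in>?S. if j = k - i' then (if i' = i \<and> i < k then throws ss i' j else 0) else 0)"
      by (rule sum.cong) auto
    also have "\<dots> = (if k - i' \<in> ?S then (if i' = i \<and> i < k then throws ss i' (k - i') else 0) else 0)"
      using assms that by (simp add: sum.delta)
    also have "\<dots> = (if i' = i \<and> i < k then throws ss i (k - i) else 0)"
      by auto
    finally show ?thesis .
  qed
  have "count (root_map n ss) (i, k) = (\<Sum>i'\<in>{1..n}. if i' = i \<and> i < k then throws ss i (k - i) else 0)"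
    unfolding root_map_def count_sum by (rule sum.cong[OF refl inner])
  also have "\<dots> = (if 1 \<le> i \<and> i \<le> n \<and> i < k then throws ss i (k - i) else 0)"
    by (auto simp: sum.delta)
  finally show ?thesis .
qed

lemma P_set_Lambda_iff:
  "p \<in> P_set (Lambda a b n) (delta a b n) \<longleftrightarrow> throw_roots n p \<and> root_sum p = delta a b n"
proof
  assume "p \<in> P_set (Lambda a b n) (delta a b n)"
  then show "throw_roots n p \<and> root_sum p = delta a b n"
    unfolding P_set_def Lambda_def throw_roots_def by auto
next
  assume p: "throw_roots n p \<and> root_sum p = delta a b n"
  have "snd x \<le> rp1 a b n" if x: "x \<in># p" for x
  proof (rule ccontr)
    assume far: "\<not> snd x \<le> rp1 a b n"
    have no_launch: "size {#y\<in>#p. fst y = snd x#} = 0"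
      using p far unfolding throw_roots_def rp1_def by auto
    have "root_sum p (snd x) = 0"
      using p far unfolding delta_def vec_state_def rp1_def by auto
    then have "size {#y\<in>#p. snd y = snd x#} = 0"
      by (simp add: root_sum_def no_launch)
    then show False using x by (cases x) auto
  qed
  then show "p \<in> P_set (Lambda a b n) (delta a b n)"
    using p unfolding P_set_def Lambda_def throw_roots_def by auto
qed

subsection \<open>The juggling sequence of a multiset of roots\<close>

definition state_of_roots :: "int list \<Rightarrow> (nat \<times> nat) multiset \<Rightarrow> nat \<Rightarrow> nat \<Rightarrow> int" where
  "state_of_roots a p i k = (if k = 0 then 0
     else vec_state a (i + k) + int (size {#x\<in>#p. fst x \<le> i \<and> snd x = i + k#}))"

definition seq_of_roots :: "int list \<Rightarrow> nat \<Rightarrow> (nat \<times> nat) multiset \<Rightarrow> (nat \<Rightarrow> int) list" where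
  "seq_of_roots a n p = map (state_of_roots a p) [0..<n + 1]"

lemma length_seq_of_roots [simp]: "length (seq_of_roots a n p) = n + 1"
  by (simp add: seq_of_roots_def)

lemma nth_seq_of_roots: "i \<le> n \<Longrightarrow> seq_of_roots a n p ! i = state_of_roots a p i"
  unfolding seq_of_roots_def by (simp del: upt_Suc add: nth_upt less_Suc_eq_le)

lemma state_of_roots_Suc:
  "0 < k \<Longrightarrow> state_of_roots a p (Suc i) k = state_of_roots a p i (k + 1) + int (count p (Suc i, Suc i + k))"
  unfolding state_of_roots_def using size_filter_launched_le_Suc[where p=p and i=i and j="Suc i + k"] by simp

lemma juggling_state_state_of_roots: "juggling_state (state_of_roots a p i)"
proof -
  have "state_of_roots a p i k = 0" if "length a < k" "\<forall>x\<in>#p. snd x \<noteq> i + k" for k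
    using that by (auto simp: state_of_roots_def vec_state_def)
  then have "{k. state_of_roots a p i k \<noteq> 0} \<subseteq> {..length a} \<union> (\<lambda>x. snd x - i) ` set_mset p"
    by (auto simp: image_iff) (metis add_diff_cancel_left' not_le)
  then have "finite {k. state_of_roots a p i k \<noteq> 0}"
    by (rule finite_subset) simp
  then show ?thesis
    by (simp add: juggling_state_def state_of_roots_def)
qed

lemma state_of_roots_0:
  assumes "throw_roots n p"
  shows "state_of_roots a p 0 = vec_state a"
proof
  fix k
  show "state_of_roots a p 0 k = vec_state a k"
    using assms by (auto simp: state_of_roots_def vec_state_def throw_roots_def)
qed

text \<open>A ball landing at time i + k was thrown at a time \<le> i if the landing is imminent (k = 1)
  or if all throws are over (n \<le> i).\<close>

lemma state_of_roots_landing: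
  assumes "throw_roots n p" "0 < k" "k = 1 \<or> n \<le> i"
  shows "state_of_roots a p i k = vec_state a (i + k) + int (size {#x\<in>#p. snd x = i + k#})"
proof -
  have "{#x\<in>#p. fst x \<le> i \<and> snd x = i + k#} = {#x\<in>#p. snd x = i + k#}"
    using assms by (intro filter_mset_cong) (force simp: throw_roots_def)+
  then show ?thesis using assms(2) by (simp add: state_of_roots_def)
qed

lemma state_of_roots_final:
  assumes "throw_roots n p" "root_sum p = delta a b n"
  shows "state_of_roots a p n = vec_state b"
proof
  fix k
  show "state_of_roots a p n k = vec_state b k"
  proof (cases "k = 0")
    case True
    then show ?thesis by (simp add: state_of_roots_def vec_state_def)
  next
    case False
    have no_launch: "size {#x\<in>#p. fst x = n + k#} = 0"
      using assms(1) False by (force simp: throw_roots_def)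
    have "root_sum p (n + k) = vec_state a (n + k) - vec_state b k"
      using assms(2) False by (simp add: delta_def)
    then show ?thesis
      using state_of_roots_landing[OF assms(1), of k n a] False by (simp add: root_sum_def no_launch)
  qed
qed

lemma js_step_state_of_roots:
  assumes p: "throw_roots n p" and launch: "root_sum p (Suc i) = vec_state a (Suc i)"
  shows "js_step (state_of_roots a p i) (state_of_roots a p (Suc i))"
proof -
  define c where "c j = count p (Suc i, Suc i + j)" for j
  have "c 0 = 0"
    using p by (auto simp: c_def throw_roots_def count_eq_zero_iff)
  moreover have "finite {j. c j \<noteq> 0}"
    unfolding c_def by (rule finite_count_nonzero_launched)
  moreover have "int (\<Sum>j\<in>{j. c j \<noteq> 0}. c j) = state_of_roots a p i 1"
  proof -
    have "size {#x\<in>#p. fst x = Suc i#} = (\<Sum>j\<in>{j. c j \<noteq> 0}. c j)"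
      unfolding c_def by (rule size_filter_launched_eq_sum_count) (use p in \<open>auto simp: throw_roots_def\<close>)
    then show ?thesis
      using launch state_of_roots_landing[OF p, of 1 i a] by (simp add: root_sum_def)
  qed
  moreover have "\<forall>k\<ge>1. state_of_roots a p (Suc i) k = state_of_roots a p i (k + 1) + int (c k)"
    by (simp add: c_def state_of_roots_Suc)
  ultimately show ?thesis unfolding js_step_def by blast
qed

lemma seq_of_roots_in_JS_nocap:
  assumes "p \<in> P_set (Lambda a b n) (delta a b n)"
  shows "seq_of_roots a n p \<in> JS_nocap a b n"
proof -
  have p: "throw_roots n p" and sum: "root_sum p = delta a b n"
    using assms by (simp_all add: P_set_Lambda_iff)
  have "js_step (state_of_roots a p i) (state_of_roots a p (Suc i))" if "i < n" for i
    using that sum by (intro js_step_state_of_roots[OF p]) (simp add: delta_def)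
  then show ?thesis
    unfolding JS_nocap_def
    using state_of_roots_0[OF p] state_of_roots_final[OF p sum]
    by (simp add: nth_seq_of_roots juggling_state_state_of_roots)
qed

lemma throws_seq_of_roots:
  "i < n \<Longrightarrow> 0 < j \<Longrightarrow> throws (seq_of_roots a n p) (Suc i) j = count p (Suc i, Suc i + j)"
  by (simp add: throws_def nth_seq_of_roots state_of_roots_Suc)

lemma root_map_seq_of_roots:
  assumes "p \<in> P_set (Lambda a b n) (delta a b n)"
  shows "root_map n (seq_of_roots a n p) = p"
proof -
  have p: "throw_roots n p"
    using assms by (simp add: P_set_Lambda_iff)
  have fin: "\<forall>i\<in>{1..n}. finite {j. 1 \<le> j \<and> throws (seq_of_roots a n p) i j \<noteq> 0}"
  proof
    fix i assume "i \<in> {1..n}"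
    then obtain i0 where i0: "i = Suc i0" "i0 < n" by (cases i) auto
    then have "{j. 1 \<le> j \<and> throws (seq_of_roots a n p) i j \<noteq> 0} \<subseteq> {j. count p (i, i + j) \<noteq> 0}"
      by (auto simp: throws_seq_of_roots)
    then show "finite {j. 1 \<le> j \<and> throws (seq_of_roots a n p) i j \<noteq> 0}"
      using finite_count_nonzero_launched finite_subset by blast
  qed
  show ?thesis
  proof (rule multiset_eqI)
    fix x :: "nat \<times> nat"
    obtain i k where x: "x = (i, k)" by fastforce
    show "count (root_map n (seq_of_roots a n p)) x = count p x"
    proof (cases "1 \<le> i \<and> i \<le> n \<and> i < k")
      case True
      then obtain i0 where "i = Suc i0" "i0 < n" by (cases i) auto
      then show ?thesis
        using True unfolding x count_root_map[OF fin] by (simp add: throws_seq_of_roots)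
    next
      case False
      then have "(i, k) \<notin># p" using p by (auto simp: throw_roots_def)
      then show ?thesis
        using False unfolding x count_root_map[OF fin] by (auto simp: not_in_iff)
    qed
  qed
qed

subsection \<open>The multiset of roots of a juggling sequence\<close>

lemma throws_JS_nocap:
  assumes ss: "ss \<in> JS_nocap a b n" and i: "i < n"
  shows "throws ss (Suc i) 0 = 0"
    and "finite {k. throws ss (Suc i) k \<noteq> 0}"
    and "int (\<Sum>k\<in>{k. throws ss (Suc i) k \<noteq> 0}. throws ss (Suc i) k) = (ss ! i) 1"
    and "\<forall>k\<ge>1. (ss ! Suc i) k = (ss ! i) (k + 1) + int (throws ss (Suc i) k)"
proof -
  have step: "js_step (ss ! i) (ss ! Suc i)" and "juggling_state (ss ! Suc i)"
    using ss i unfolding JS_nocap_def by auto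
  then have top: "(ss ! Suc i) 0 = 0"
    by (simp add: juggling_state_def)
  obtain c where c: "c 0 = 0" "finite {k. c k \<noteq> 0}" "int (\<Sum>k\<in>{k. c k \<noteq> 0}. c k) = (ss ! i) 1"
    "\<forall>k\<ge>1. (ss ! Suc i) k = (ss ! i) (k + 1) + int (c k)"
    using step unfolding js_step_def by blast
  have "throws ss (Suc i) = c"
  proof
    fix k
    show "throws ss (Suc i) k = c k"
    proof (cases "k = 0")
      case True
      have "(ss ! i) 1 \<ge> 0" using c(3) by linarith
      then show ?thesis using True top c(1) by (simp add: throws_def)
    next
      case False
      then show ?thesis using c(4) by (simp add: throws_def)
    qed
  qed
  with c show "throws ss (Suc i) 0 = 0"
    and "finite {k. throws ss (Suc i) k \<noteq> 0}"
    and "int (\<Sum>k\<in>{k. throws ss (Suc i) k \<noteq> 0}. throws ss (Suc i) k) = (ss ! i) 1"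
    and "\<forall>k\<ge>1. (ss ! Suc i) k = (ss ! i) (k + 1) + int (throws ss (Suc i) k)"
    by simp_all
qed

lemma count_root_map_JS_nocap:
  assumes ss: "ss \<in> JS_nocap a b n"
  shows "count (root_map n ss) (i, k)
           = (if 1 \<le> i \<and> i \<le> n \<and> i < k then throws ss i (k - i) else 0)"
proof (rule count_root_map, rule ballI)
  fix i assume "i \<in> {1..n}"
  then obtain i0 where "i = Suc i0" "i0 < n" by (cases i) auto
  then have "finite {j. throws ss i j \<noteq> 0}" using throws_JS_nocap(2)[OF ss] by simp
  then show "finite {j. 1 \<le> j \<and> throws ss i j \<noteq> 0}" by (rule finite_subset[rotated]) auto
qed

lemma throw_roots_root_map:
  assumes "ss \<in> JS_nocap a b n"
  shows "throw_roots n (root_map n ss)"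
  unfolding throw_roots_def
proof
  fix x assume "x \<in># root_map n ss"
  moreover obtain i k where "x = (i, k)" by fastforce
  ultimately show "1 \<le> fst x \<and> fst x \<le> n \<and> fst x < snd x"
    using count_root_map_JS_nocap[OF assms, of i k] by (auto simp: not_in_iff[symmetric] split: if_splits)
qed

lemma JS_nocap_nth_eq_state_of_roots:
  assumes ss: "ss \<in> JS_nocap a b n"
  shows "i \<le> n \<Longrightarrow> ss ! i = state_of_roots a (root_map n ss) i"
proof (induction i)
  case 0
  have "ss ! 0 = vec_state a" using ss unfolding JS_nocap_def by auto
  then show ?case using state_of_roots_0[OF throw_roots_root_map[OF ss]] by simp
next
  case (Suc i)
  then have i: "i < n" by simp
  show ?case
  proof
    fix k
    show "(ss ! Suc i) k = state_of_roots a (root_map n ss) (Suc i) k"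
    proof (cases "k = 0")
      case True
      have "juggling_state (ss ! Suc i)" using ss Suc.prems unfolding JS_nocap_def by auto
      then show ?thesis using True by (simp add: juggling_state_def state_of_roots_def)
    next
      case False
      have "(ss ! Suc i) k = (ss ! i) (k + 1) + int (throws ss (Suc i) k)"
        using throws_JS_nocap(4)[OF ss i] False by simp
      also have "\<dots> = state_of_roots a (root_map n ss) i (k + 1)
                      + int (count (root_map n ss) (Suc i, Suc i + k))"
        using Suc.IH i False count_root_map_JS_nocap[OF ss] by simp
      also have "\<dots> = state_of_roots a (root_map n ss) (Suc i) k"
        using False by (simp add: state_of_roots_Suc)
      finally show ?thesis .
    qed
  qed
qed

lemma seq_of_roots_root_map:
  assumes ss: "ss \<in> JS_nocap a b n"
  shows "seq_of_roots a n (root_map n ss) = ss"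
proof (rule nth_equalityI)
  show "length (seq_of_roots a n (root_map n ss)) = length ss"
    using ss by (simp add: JS_nocap_def)
  fix i assume "i < length (seq_of_roots a n (root_map n ss))"
  then show "seq_of_roots a n (root_map n ss) ! i = ss ! i"
    using JS_nocap_nth_eq_state_of_roots[OF ss] by (simp add: nth_seq_of_roots)
qed

lemma root_sum_root_map:
  assumes ss: "ss \<in> JS_nocap a b n"
  shows "root_sum (root_map n ss) k = delta a b n k"
proof -
  define p where "p = root_map n ss"
  have p: "throw_roots n p"
    unfolding p_def using throw_roots_root_map[OF ss] .
  have state: "i \<le> n \<Longrightarrow> ss ! i = state_of_roots a p i" for i
    unfolding p_def using JS_nocap_nth_eq_state_of_roots[OF ss] .
  consider "k = 0" | i where "k = Suc i" "i < n" | "n < k"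
    by (metis Suc_le_eq not0_implies_Suc not_le)
  then have "root_sum p k = delta a b n k"
  proof cases
    case 1
    have "size {#x\<in>#p. fst x = 0#} = 0" "size {#x\<in>#p. snd x = 0#} = 0"
      using p by (auto simp: throw_roots_def)
    then show ?thesis
      using 1 by (simp only: root_sum_def delta_def vec_state_def) simp
  next
    case (2 i)
    have "throws ss k = (\<lambda>j. count p (k, k + j))"
      using 2 throws_JS_nocap(1)[OF ss] count_root_map_JS_nocap[OF ss]
      by (auto simp: p_def fun_eq_iff)
    then have "int (\<Sum>j\<in>{j. count p (k, k + j) \<noteq> 0}. count p (k, k + j)) = state_of_roots a p i 1"
      using 2 throws_JS_nocap(3)[OF ss 2(2)] state[of i] by (simp only:)
    moreover have "size {#x\<in>#p. fst x = k#} = (\<Sum>j\<in>{j. count p (k, k + j) \<noteq> 0}. count p (k, k + j))"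
      by (rule size_filter_launched_eq_sum_count) (use p in \<open>auto simp: throw_roots_def\<close>)
    ultimately have "int (size {#x\<in>#p. fst x = k#}) = state_of_roots a p i 1"
      by simp
    then show ?thesis
      using 2 state_of_roots_landing[OF p, of 1 i a] by (simp add: root_sum_def delta_def)
  next
    case 3
    have no_launch: "size {#x\<in>#p. fst x = k#} = 0"
      using p 3 by (force simp: throw_roots_def)
    have "ss ! n = vec_state b"
      using ss unfolding JS_nocap_def by auto
    then show ?thesis
      using 3 state[of n] state_of_roots_landing[OF p, of "k - n" n a]
      by (simp add: root_sum_def delta_def no_launch)
  qed
  then show ?thesis
    unfolding p_def .
qed

lemma root_map_in_P_set:
  "ss \<in> JS_nocap a b n \<Longrightarrow> root_map n ss \<in> P_set (Lambda a b n) (delta a b n)"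
  by (simp add: P_set_Lambda_iff throw_roots_root_map root_sum_root_map fun_eq_iff)

subsection \<open>Hand capacity\<close>

lemma state_of_roots_capacity_iff:
  assumes p: "throw_roots n p"
  shows "(\<forall>i\<le>n. \<forall>k. state_of_roots a p i k \<le> int m)
           \<longleftrightarrow> (\<forall>j\<ge>1. vec_state a j + int (size {#x\<in>#p. snd x = j#}) \<le> int m)"
proof
  assume cap: "\<forall>i\<le>n. \<forall>k. state_of_roots a p i k \<le> int m"
  show "\<forall>j\<ge>1. vec_state a j + int (size {#x\<in>#p. snd x = j#}) \<le> int m"
  proof (intro allI impI)
    fix j :: nat assume j: "1 \<le> j"
    define i where "i = min (j - 1) n"
    have "i + (j - i) = j" "0 < j - i" "j - i = 1 \<or> n \<le> i"
      using j unfolding i_def by auto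
    then have "state_of_roots a p i (j - i) = vec_state a j + int (size {#x\<in>#p. snd x = j#})"
      using state_of_roots_landing[OF p, of "j - i" i a] by simp
    moreover have "state_of_roots a p i (j - i) \<le> int m"
      using cap by (simp add: i_def)
    ultimately show "vec_state a j + int (size {#x\<in>#p. snd x = j#}) \<le> int m"
      by simp
  qed
next
  assume cap: "\<forall>j\<ge>1. vec_state a j + int (size {#x\<in>#p. snd x = j#}) \<le> int m"
  show "\<forall>i\<le>n. \<forall>k. state_of_roots a p i k \<le> int m"
  proof (intro allI impI)
    fix i k :: nat
    have "size {#x\<in>#p. fst x \<le> i \<and> snd x = i + k#} \<le> size {#x\<in>#p. snd x = i + k#}"
      by (rule size_mset_mono, rule filter_mset_mono_strong) auto
    then show "state_of_roots a p i k \<le> int m"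
      using cap[rule_format, of "i + k"] by (auto simp: state_of_roots_def)
  qed
qed

lemma bij_betw_root_map_JS_nocap:
  "bij_betw (root_map n) (JS_nocap a b n) (P_set (Lambda a b n) (delta a b n))"
  by (rule bij_betw_byWitness[where f'="seq_of_roots a n"])
     (auto simp: seq_of_roots_root_map root_map_seq_of_roots root_map_in_P_set seq_of_roots_in_JS_nocap)

lemma JS_capacity_iff_Q_set:
  assumes "ss \<in> JS_nocap a b n"
  shows "ss \<in> JS a b n m \<longleftrightarrow> root_map n ss \<in> Q_set a b n m"
proof -
  have "ss \<in> JS a b n m \<longleftrightarrow> (\<forall>i\<le>n. \<forall>k. state_of_roots a (root_map n ss) i k \<le> int m)"
    using assms JS_nocap_nth_eq_state_of_roots[OF assms] by (simp add: JS_def)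
  also have "\<dots> \<longleftrightarrow> root_map n ss \<in> Q_set a b n m"
    using state_of_roots_capacity_iff[OF throw_roots_root_map[OF assms]] root_map_in_P_set[OF assms]
    by (simp add: Q_set_def)
  finally show ?thesis .
qed

lemma bij_betw_root_map_JS:
  "bij_betw (root_map n) (JS a b n m) (Q_set a b n m)"
proof (rule bij_betw_subset[OF bij_betw_root_map_JS_nocap])
  show JS_sub: "JS a b n m \<subseteq> JS_nocap a b n"
    by (auto simp: JS_def)
  have "Q_set a b n m \<subseteq> root_map n ` JS_nocap a b n"
    using bij_betw_root_map_JS_nocap by (auto simp: Q_set_def bij_betw_def)
  then show "root_map n ` JS a b n m = Q_set a b n m"
    using JS_sub JS_capacity_iff_Q_set by blast
qed

text \<open>None of the hypotheses is used: if the ball counts of a and b differ, all the sets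
  involved are empty, and the constructions make sense for n = 0 and m = 0 as well.\<close>

theorem mainTheorem7:
  fixes a b :: "int list" and n m :: nat
  assumes "sum_list a = sum_list b"
    and "0 < n" and "0 < m"
  shows "bij_betw (root_map n) (JS a b n m) (Q_set a b n m)
       \<and> js a b n m = card (Q_set a b n m)
       \<and> js_nocap a b n = K_part (Lambda a b n) (delta a b n)"
  using bij_betw_root_map_JS bij_betw_root_map_JS_nocap bij_betw_same_card
  unfolding js_def js_nocap_def K_part_def by blast

end
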